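(* Let $p_0,q\in\mathcal S^{d-1}$ and consider the preference dynamics with the fixed recommendation $q_t=q$ for all $t\ge 0$, i.e. $\tilde p_{t+1}=p_t+\eta_t\,(p_t^\top q)\,q$, $p_{t+1}=\tilde p_{t+1}/\|\tilde p_{t+1}\|_2$, with step sizes either constant ($\eta_t=\eta$) or decreasing ($\eta_t=\frac{\eta}{t+s}$). Then for all $t\ge 0$, \[p_t=\left(\frac{\gamma_t}{\sqrt{(q^\top p_0)^2+\gamma_t^2(1-(q^\top p_0)^2)}}\right)p_0+\left(\frac{q^\top p_0\,(1-\gamma_t)}{\sqrt{(q^\top p_0)^2+\gamma_t^2(1-(q^\top p_0)^2)}}\right)q,\] where $\gamma_t=(\eta+1)^{-t}$ in the constant case and $\gamma_t=\prod_{k=0}^{\eta-1}\frac{s+k}{t+s+k}$ in the decreasing case. Moreover, the magnitude of the coefficient of $p_0$ is nonincreasing in $t$ and the magnitude of the coefficient of $q$ is nondecreasing in $t$.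
   Context: $\mathcal S^{d-1}$ denotes the unit sphere in $\mathbb{R}^d$. In the constant step-size setting $\eta>0$ is a constant; in the decreasing step-size setting $\eta$ and $s$ are positive integers. *)

theory Defs
  imports "HOL-Analysis.Analysis"
begin

fun pref_dyn :: "(nat \<Rightarrow> real) \<Rightarrow> 'a::euclidean_space \<Rightarrow> 'a \<Rightarrow> nat \<Rightarrow> 'a" where
  "pref_dyn eta p0 q 0 = p0"
| "pref_dyn eta p0 q (Suc t) =
     (let pt = pref_dyn eta p0 q t;
          pp = pt + (eta t * (pt \<bullet> q)) *\<^sub>R q
      in pp /\<^sub>R norm pp)"

definition gamma_const :: "real \<Rightarrow> nat \<Rightarrow> real" where
  "gamma_const eta t = inverse ((eta + 1) ^ t)"

definition gamma_decr :: "nat \<Rightarrow> nat \<Rightarrow> nat \<Rightarrow> real" where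
  "gamma_decr eta s t = (\<Prod>k<eta. real (s + k) / real (t + s + k))"

definition coef_p0 :: "real \<Rightarrow> real \<Rightarrow> real" where
  "coef_p0 c g = g / sqrt (c\<^sup>2 + g\<^sup>2 * (1 - c\<^sup>2))"

definition coef_q :: "real \<Rightarrow> real \<Rightarrow> real" where
  "coef_q c g = c * (1 - g) / sqrt (c\<^sup>2 + g\<^sup>2 * (1 - c\<^sup>2))"

end

theory Submission
  imports Defs
begin

(* The update p \<mapsto> p + \<eta>_t (p \<bullet> q) q is linear, so normalising after every step is the same
   as normalising once at the end. The vector g p_0 + (q \<bullet> p_0) (1 - g) q has q-component
   q \<bullet> p_0 for every g, and the update maps it to (1 + \<eta>_t) times the same vector with g replaced
   by g / (1 + \<eta>_t). Hence p_t is the normalisation of that vector at g = \<gamma>_t, where \<gamma>_0 = 1 and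
   \<gamma>_(t+1) = \<gamma>_t / (1 + \<eta>_t); both step-size schedules produce exactly the \<gamma>_t of the statement.
   The coefficients are monotone in g, and \<gamma>_t decreases from 1. *)

definition closed_form_vec :: "'a::real_inner \<Rightarrow> 'a \<Rightarrow> real \<Rightarrow> 'a" where
  "closed_form_vec p0 q g = g *\<^sub>R p0 + ((q \<bullet> p0) * (1 - g)) *\<^sub>R q"

lemma pref_dyn_Suc_sgn:
  "pref_dyn eta p0 q (Suc t) =
     sgn (pref_dyn eta p0 q t + (eta t * (pref_dyn eta p0 q t \<bullet> q)) *\<^sub>R q)"
  by (simp add: Let_def sgn_div_norm)

lemma sgn_update_sgn:
  fixes v q :: "'a::real_inner"
  shows "sgn (sgn v + (e * (sgn v \<bullet> q)) *\<^sub>R q) = sgn (v + (e * (v \<bullet> q)) *\<^sub>R q)"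
proof (cases "v = 0")
  case False
  have "sgn v + (e * (sgn v \<bullet> q)) *\<^sub>R q = inverse (norm v) *\<^sub>R (v + (e * (v \<bullet> q)) *\<^sub>R q)"
    by (simp add: sgn_div_norm divide_inverse_commute scaleR_add_right)
  then show ?thesis
    using False by (simp add: sgn_scaleR)
qed simp

lemma inner_closed_form_vec_unit:
  assumes "norm q = 1"
  shows "closed_form_vec p0 q g \<bullet> q = q \<bullet> p0"
  using assms by (simp add: closed_form_vec_def inner_add_left inner_commute[of p0] norm_eq_1
      algebra_simps)

lemma update_closed_form_vec:
  assumes "norm q = 1" and "1 + e \<noteq> 0"
  shows "closed_form_vec p0 q g + (e * (closed_form_vec p0 q g \<bullet> q)) *\<^sub>R q
       = (1 + e) *\<^sub>R closed_form_vec p0 q (g / (1 + e))"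
proof -
  have "(1 + e) *\<^sub>R closed_form_vec p0 q (g / (1 + e))
      = g *\<^sub>R p0 + ((1 + e) * (q \<bullet> p0 * (1 - g / (1 + e)))) *\<^sub>R q"
    using assms(2) by (simp add: closed_form_vec_def scaleR_add_right)
  also have "(1 + e) * (q \<bullet> p0 * (1 - g / (1 + e))) = q \<bullet> p0 * (1 - g) + e * (q \<bullet> p0)"
    using assms(2) by (simp add: field_simps)
  finally show ?thesis
    unfolding inner_closed_form_vec_unit[OF assms(1)] by (simp add: closed_form_vec_def scaleR_add_left)
qed

lemma pref_dyn_eq_sgn_closed_form_vec:
  assumes "norm p0 = 1" and "norm q = 1"
    and step_pos: "\<And>t. 1 + eta t > 0"
    and "gam 0 = 1" and gam_Suc: "\<And>t. gam (Suc t) = gam t / (1 + eta t)"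
  shows "pref_dyn eta p0 q t = sgn (closed_form_vec p0 q (gam t))"
proof (induction t)
  case 0
  then show ?case
    using assms(1,4) by (simp add: closed_form_vec_def sgn_div_norm)
next
  case (Suc t)
  have factor_nonzero: "1 + eta t \<noteq> 0"
    using step_pos[of t] by simp
  have "pref_dyn eta p0 q (Suc t) =
      sgn ((1 + eta t) *\<^sub>R closed_form_vec p0 q (gam t / (1 + eta t)))"
    by (simp only: pref_dyn_Suc_sgn Suc sgn_update_sgn update_closed_form_vec[OF assms(2) factor_nonzero])
  then show ?case
    using step_pos[of t] by (simp add: sgn_scaleR gam_Suc)
qed

lemma norm_closed_form_vec:
  fixes p0 q :: "'a::real_inner"
  assumes "norm p0 = 1" and "norm q = 1"
  shows "norm (closed_form_vec p0 q g) = sqrt ((q \<bullet> p0)\<^sup>2 + g\<^sup>2 * (1 - (q \<bullet> p0)\<^sup>2))"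
proof -
  have "p0 \<bullet> p0 = 1" and "q \<bullet> q = 1"
    using assms by (simp_all add: norm_eq_1)
  then have "closed_form_vec p0 q g \<bullet> closed_form_vec p0 q g
      = (q \<bullet> p0)\<^sup>2 + g\<^sup>2 * (1 - (q \<bullet> p0)\<^sup>2)"
    by (simp add: closed_form_vec_def inner_add_left inner_add_right inner_commute[of p0 q]
        algebra_simps power2_eq_square)
  then show ?thesis
    by (simp add: norm_eq_sqrt_inner)
qed

lemma sgn_closed_form_vec:
  fixes p0 q :: "'a::real_inner"
  assumes "norm p0 = 1" and "norm q = 1"
  shows "sgn (closed_form_vec p0 q g) = coef_p0 (q \<bullet> p0) g *\<^sub>R p0 + coef_q (q \<bullet> p0) g *\<^sub>R q"
  unfolding sgn_div_norm norm_closed_form_vec[OF assms]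
  by (simp add: coef_p0_def coef_q_def closed_form_vec_def scaleR_add_right divide_inverse_commute)

lemma power2_inner_le_1:
  fixes x y :: "'a::real_inner"
  assumes "norm x = 1" and "norm y = 1"
  shows "(x \<bullet> y)\<^sup>2 \<le> 1"
  using Cauchy_Schwarz_ineq2[of x y] assms by (simp add: abs_square_le_1)

lemma closed_form_denominator_pos:
  fixes c g :: real
  assumes "c\<^sup>2 \<le> 1" and "g \<noteq> 0"
  shows "0 < c\<^sup>2 + g\<^sup>2 * (1 - c\<^sup>2)"
  using assms by (cases "c = 0") (simp_all add: add_pos_nonneg)

lemma abs_div_sqrt:
  fixes x a :: real
  shows "\<bar>x\<bar> / sqrt a = sqrt (x\<^sup>2 / a)"
  by (simp add: real_sqrt_divide)

lemma abs_coef_p0_mono: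
  assumes "c\<^sup>2 \<le> 1" and "0 < g" and "g \<le> g'"
  shows "\<bar>coef_p0 c g\<bar> \<le> \<bar>coef_p0 c g'\<bar>"
proof -
  define D where "D h = c\<^sup>2 + h\<^sup>2 * (1 - c\<^sup>2)" for h
  have D_pos: "0 < D g" "0 < D g'"
    using assms closed_form_denominator_pos unfolding D_def by auto
  have "g\<^sup>2 \<le> g'\<^sup>2"
    using assms(2,3) by (simp add: power_mono)
  then have "c\<^sup>2 * g\<^sup>2 \<le> c\<^sup>2 * g'\<^sup>2"
    by (rule mult_left_mono) simp
  then have "g\<^sup>2 * D g' \<le> g'\<^sup>2 * D g"
    unfolding D_def by (simp add: algebra_simps)
  then have "g\<^sup>2 / D g \<le> g'\<^sup>2 / D g'"
    using D_pos by (simp add: divide_simps mult.commute)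
  moreover have "\<bar>coef_p0 c h\<bar> = sqrt (h\<^sup>2 / D h)" if "0 < D h" for h
    unfolding coef_p0_def abs_divide D_def[symmetric] using that by (simp add: abs_div_sqrt)
  ultimately show ?thesis
    using D_pos by simp
qed

lemma abs_coef_q_antimono:
  assumes "c\<^sup>2 \<le> 1" and "0 < g" and "g \<le> g'" and "g' \<le> 1"
  shows "\<bar>coef_q c g'\<bar> \<le> \<bar>coef_q c g\<bar>"
proof -
  define D where "D h = c\<^sup>2 + h\<^sup>2 * (1 - c\<^sup>2)" for h
  have D_pos: "0 < D g" "0 < D g'"
    using assms closed_form_denominator_pos unfolding D_def by auto
  moreover have "D g \<le> D g'"
    unfolding D_def using assms by (simp add: mult_right_mono power_mono)
  moreover have "(c * (1 - g'))\<^sup>2 \<le> (c * (1 - g))\<^sup>2"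
    unfolding power_mult_distrib using assms by (simp add: mult_left_mono power_mono)
  ultimately have "(c * (1 - g'))\<^sup>2 / D g' \<le> (c * (1 - g))\<^sup>2 / D g"
    by (simp add: frac_le)
  moreover have "\<bar>coef_q c h\<bar> = sqrt ((c * (1 - h))\<^sup>2 / D h)" if "0 < D h" for h
    unfolding coef_q_def abs_divide D_def[symmetric] using that by (simp add: abs_div_sqrt)
  ultimately show ?thesis
    using D_pos by simp
qed

lemma step_factor_seq:
  fixes eta gam :: "nat \<Rightarrow> real"
  assumes "\<And>t. 0 \<le> eta t" and "gam 0 = 1" and "\<And>t. gam (Suc t) = gam t / (1 + eta t)"
  shows step_factor_seq_pos: "0 < gam t"
    and step_factor_seq_antimono: "antimono gam"
    and step_factor_seq_le_1: "gam t \<le> 1"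
proof -
  show pos: "0 < gam t" for t
  proof (induction t)
    case (Suc t)
    then show ?case
      using assms(1)[of t] assms(3)[of t] by simp
  qed (simp add: assms(2))
  have "gam (Suc t) \<le> gam t" for t
    using pos[of t] assms(1)[of t] assms(3)[of t] by (simp add: divide_le_eq)
  then show "antimono gam"
    by (simp add: antimono_iff_le_Suc)
  then show "gam t \<le> 1"
    using assms(2) by (metis antimonoD le0)
qed

lemma pref_dyn_closed_form:
  fixes p0 q :: "'a::euclidean_space"
  assumes "norm p0 = 1" and "norm q = 1"
    and "\<And>t. 0 \<le> eta t" and "gam 0 = 1" and "\<And>t. gam (Suc t) = gam t / (1 + eta t)"
  shows "(\<forall>t. pref_dyn eta p0 q t =
            coef_p0 (q \<bullet> p0) (gam t) *\<^sub>R p0 + coef_q (q \<bullet> p0) (gam t) *\<^sub>R q)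
     \<and> antimono (\<lambda>t. \<bar>coef_p0 (q \<bullet> p0) (gam t)\<bar>)
     \<and> mono (\<lambda>t. \<bar>coef_q (q \<bullet> p0) (gam t)\<bar>)"
proof (intro conjI allI antimonoI monoI)
  have "1 + eta t > 0" for t
    using assms(3)[of t] by simp
  then show "pref_dyn eta p0 q t =
      coef_p0 (q \<bullet> p0) (gam t) *\<^sub>R p0 + coef_q (q \<bullet> p0) (gam t) *\<^sub>R q" for t
    using pref_dyn_eq_sgn_closed_form_vec[OF assms(1,2) _ assms(4,5)]
    by (simp add: sgn_closed_form_vec[OF assms(1,2)])
  have c: "(q \<bullet> p0)\<^sup>2 \<le> 1"
    using power2_inner_le_1 assms(1,2) by blast
  note gam_pos = step_factor_seq_pos[OF assms(3-5)]
    and gam_antimono = step_factor_seq_antimono[OF assms(3-5)]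
    and gam_le_1 = step_factor_seq_le_1[OF assms(3-5)]
  show "\<bar>coef_p0 (q \<bullet> p0) (gam t')\<bar> \<le> \<bar>coef_p0 (q \<bullet> p0) (gam t)\<bar>" if "t \<le> t'" for t t'
    using abs_coef_p0_mono[OF c] gam_pos antimonoD[OF gam_antimono that] by blast
  show "\<bar>coef_q (q \<bullet> p0) (gam t)\<bar> \<le> \<bar>coef_q (q \<bullet> p0) (gam t')\<bar>" if "t \<le> t'" for t t'
    using abs_coef_q_antimono[OF c] gam_pos gam_le_1 antimonoD[OF gam_antimono that] by blast
qed

lemma gamma_const_Suc: "gamma_const eta (Suc t) = gamma_const eta t / (1 + eta)"
  by (simp add: gamma_const_def field_simps)

lemma gamma_decr_Suc:
  assumes "0 < s"
  shows "gamma_decr e s (Suc t) = gamma_decr e s t / (1 + real e / real (t + s))"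
proof -
  have "gamma_decr e s (Suc t)
      = gamma_decr e s t * (\<Prod>k<e. real (t + s + k) / real (t + s + Suc k))"
    using assms by (simp add: gamma_decr_def flip: prod.distrib)
  also have "(\<Prod>k<e. real (t + s + k) / real (t + s + Suc k)) = real (t + s) / real (t + s + e)"
    using assms by (subst prod_lessThan_telescope'[where f = "\<lambda>k. real (t + s + k)"]) simp_all
  finally show ?thesis
    using assms by (simp add: field_simps)
qed

theorem corollary1:
  fixes p0 q :: "'a::euclidean_space"
    and \<eta> :: real and \<eta>d s :: nat
  assumes "norm p0 = 1" and "norm q = 1"
    and "\<eta> > 0" and "\<eta>d > 0" and "s > 0"
  shows
    "(\<forall>t. pref_dyn (\<lambda>_. \<eta>) p0 q t =
            coef_p0 (q \<bullet> p0) (gamma_const \<eta> t) *\<^sub>R p0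
          + coef_q (q \<bullet> p0) (gamma_const \<eta> t) *\<^sub>R q)
     \<and> antimono (\<lambda>t. \<bar>coef_p0 (q \<bullet> p0) (gamma_const \<eta> t)\<bar>)
     \<and> mono (\<lambda>t. \<bar>coef_q (q \<bullet> p0) (gamma_const \<eta> t)\<bar>)
     \<and> (\<forall>t. pref_dyn (\<lambda>t. real \<eta>d / real (t + s)) p0 q t =
            coef_p0 (q \<bullet> p0) (gamma_decr \<eta>d s t) *\<^sub>R p0
          + coef_q (q \<bullet> p0) (gamma_decr \<eta>d s t) *\<^sub>R q)
     \<and> antimono (\<lambda>t. \<bar>coef_p0 (q \<bullet> p0) (gamma_decr \<eta>d s t)\<bar>)
     \<and> mono (\<lambda>t. \<bar>coef_q (q \<bullet> p0) (gamma_decr \<eta>d s t)\<bar>)"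
proof -
  have "gamma_const \<eta> 0 = 1" and "gamma_decr \<eta>d s 0 = 1"
    using assms(5) by (simp_all add: gamma_const_def gamma_decr_def)
  then show ?thesis
    using pref_dyn_closed_form[OF assms(1,2), of "\<lambda>_. \<eta>" "gamma_const \<eta>"]
      pref_dyn_closed_form[OF assms(1,2), of "\<lambda>t. real \<eta>d / real (t + s)" "gamma_decr \<eta>d s"]
      assms(3) gamma_const_Suc gamma_decr_Suc[OF assms(5)]
    by simp
qed

end
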